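(* Let $\tau,t\in\mathbb{R}$ and let $\beta_n=\beta_n(\tau,t)$ be the recurrence coefficients of the monic orthogonal polynomials for the weight $\omega(x;\tau,t)=\exp(-x^6+\tau x^4+tx^2)$ on $\mathbb{R}$. Then, for $n\ge1$, $\beta_n$ and $\beta_{n+1}$ satisfy \begin{align*} &\frac{\partial^2\beta_n}{\partial t^2}-3\left(\beta_n+\beta_{n+1}-\tfrac29\tau\right)\frac{\partial\beta_n}{\partial t}+\beta_n^3+6\beta_n^2\beta_{n+1}+3\beta_n\beta_{n+1}^2-\tfrac23\tau\beta_n(\beta_n+2\beta_{n+1})-\tfrac13t\beta_n=\tfrac16n,\\ &\frac{\partial^2\beta_{n+1}}{\partial t^2}+3\left(\beta_n+\beta_{n+1}-\tfrac29\tau\right)\frac{\partial\beta_{n+1}}{\partial t}+\beta_{n+1}^3+6\beta_{n+1}^2\beta_n+3\beta_{n+1}\beta_n^2-\tfrac23\tau\beta_{n+1}(2\beta_n+\beta_{n+1})-\tfrac13t\beta_{n+1}=\tfrac16(n+1). \end{align*}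
   Context: The monic orthogonal polynomials satisfy $P_{n+1}(x)=xP_n(x)-\beta_nP_{n-1}(x)$ with $P_{-1}=0$, $P_0=1$, where $\beta_n>0$ for $n\ge1$. The convention $\beta_0=\beta_{-1}=0$ is used. *)

theory Defs
  imports "HOL-Analysis.Analysis" "HOL-Computational_Algebra.Polynomial"
begin

definition weight :: "real \<Rightarrow> real \<Rightarrow> real \<Rightarrow> real" where
  "weight tau t x = exp (- (x ^ 6) + tau * x ^ 4 + t * x ^ 2)"

definition wip :: "real \<Rightarrow> real \<Rightarrow> real poly \<Rightarrow> real poly \<Rightarrow> real" where
  "wip tau t p q = (LINT x|lborel. poly p x * poly q x * weight tau t x)"

definition monic_OP :: "real \<Rightarrow> real \<Rightarrow> nat \<Rightarrow> real poly" where
  "monic_OP tau t n = (THE p. degree p = n \<and> lead_coeff p = 1 \<and>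
       (\<forall>k<n. wip tau t p (monom 1 k) = 0))"

definition beta :: "nat \<Rightarrow> real \<Rightarrow> real \<Rightarrow> real" where
  "beta n tau t = (if n = 0 then 0 else
     (THE b. monic_OP tau t (Suc n) =
        [:0, 1:] * monic_OP tau t n - smult b (monic_OP tau t (n - 1))))"

end

theory Submission
  imports Defs "HOL-Probability.Probability" "HOL-Real_Asymp.Real_Asymp"
begin

text \<open>
  The weight is even and has finite moments of all orders, so its moment functional L is symmetric
  and positive definite, and the monic orthogonal polynomials satisfy
  P_(n+1) = x P_n - beta_n P_(n-1) with beta_n = h_n / h_(n-1), where h_n = L (P_n^2).
  Differentiating in t multiplies the weight by x^2; this gives h_n' = h_n (beta_(n+1) + beta_n)
  and hence the Volterra lattice beta_n' = beta_n (beta_(n+1) - beta_(n-1)).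
  Integrating (P_n P_(n-1))' by parts against the weight gives Freud's string equation, which
  expresses n as a polynomial in beta_(n-2), ..., beta_(n+2).
  Differentiating the lattice once more and eliminating the outer coefficients with the string
  equation at n (resp. n + 1) turns each of the two claimed equations into a polynomial identity.
\<close>

section \<open>Monic orthogonal polynomials of a symmetric functional\<close>

definition has_parity :: "nat \<Rightarrow> 'a::comm_ring_1 poly \<Rightarrow> bool" where
  "has_parity m p \<longleftrightarrow> pcompose p [:0, -1:] = smult ((-1) ^ m) p"

lemma has_parity_1: "has_parity 0 1"
  by (simp add: has_parity_def pcompose_1)

lemma has_parity_X: "has_parity 1 [:0, 1:]"
  by (simp add: has_parity_def pcompose_pCons)

lemma has_parity_mult: "has_parity a p \<Longrightarrow> has_parity b q \<Longrightarrow> has_parity (a + b) (p * q)"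
  by (simp add: has_parity_def pcompose_mult power_add mult.commute)

lemma has_parity_monom: "has_parity k (monom c k)"
proof (induction k)
  case (Suc k)
  have "monom c (Suc k) = [:0, 1:] * monom c k"
    by (simp add: monom_Suc)
  then show ?case
    using has_parity_mult[OF has_parity_X Suc] by simp
qed (simp add: has_parity_def monom_0)

lemma has_parity_diff: "has_parity m p \<Longrightarrow> has_parity m q \<Longrightarrow> has_parity m (p - q)"
  by (simp add: has_parity_def pcompose_diff smult_diff_right)

lemma has_parity_smult: "has_parity m p \<Longrightarrow> has_parity m (smult c p)"
  by (simp add: has_parity_def pcompose_smult mult.commute)

lemma has_parity_add_2 [simp]: "has_parity (m + 2) p \<longleftrightarrow> has_parity m p"
  by (simp add: has_parity_def)

text \<open>For a symmetric functional the three-term recurrence has no diagonal term, so it can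
  serve as the definition.\<close>

fun orth_poly :: "(real poly \<Rightarrow> real) \<Rightarrow> nat \<Rightarrow> real poly" where
  "orth_poly L 0 = 1"
| "orth_poly L (Suc 0) = [:0, 1:]"
| "orth_poly L (Suc (Suc n)) = [:0, 1:] * orth_poly L (Suc n)
     - smult (L (orth_poly L (Suc n) * orth_poly L (Suc n)) / L (orth_poly L n * orth_poly L n))
         (orth_poly L n)"

definition orth_sqnorm :: "(real poly \<Rightarrow> real) \<Rightarrow> nat \<Rightarrow> real" where
  "orth_sqnorm L n = L (orth_poly L n * orth_poly L n)"

definition rec_coeff :: "(real poly \<Rightarrow> real) \<Rightarrow> nat \<Rightarrow> real" where
  "rec_coeff L n = (if n = 0 then 0 else orth_sqnorm L n / orth_sqnorm L (n - 1))"

lemma rec_coeff_0 [simp]: "rec_coeff L 0 = 0"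
  by (simp add: rec_coeff_def)

lemma orth_poly_Suc_Suc:
  "orth_poly L (Suc (Suc n))
     = [:0, 1:] * orth_poly L (Suc n) - smult (rec_coeff L (Suc n)) (orth_poly L n)"
  by (simp add: rec_coeff_def orth_sqnorm_def)

declare orth_poly.simps(3) [simp del]

lemma X_mult_orth_poly:
  "[:0, 1:] * orth_poly L n = orth_poly L (Suc n) + smult (rec_coeff L n) (orth_poly L (n - 1))"
  by (cases n) (simp_all add: orth_poly_Suc_Suc)

lemma orth_poly_monic: "degree (orth_poly L n) = n \<and> coeff (orth_poly L n) n = 1"
proof (induction n rule: induct_nat_012)
  case (ge2 n)
  let ?p = "[:0, 1:] * orth_poly L (Suc n)" and ?q = "smult (rec_coeff L (Suc n)) (orth_poly L n)"
  have "degree ?p = Suc (Suc n)" and "coeff ?p (Suc (Suc n)) = 1"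
    using ge2 by (auto simp: degree_pCons_eq)
  moreover have "degree ?q < Suc (Suc n)"
    using ge2 degree_smult_le[of "rec_coeff L (Suc n)" "orth_poly L n"] by linarith
  ultimately have "degree (?p - ?q) = Suc (Suc n)"
    by (metis degree_add_eq_left degree_minus diff_conv_add_uminus)
  moreover have "coeff (?p - ?q) (Suc (Suc n)) = 1"
    using ge2 by (simp add: coeff_eq_0)
  ultimately show ?case
    unfolding orth_poly_Suc_Suc by blast
qed simp_all

lemma degree_orth_poly [simp]: "degree (orth_poly L n) = n"
  using orth_poly_monic by blast

lemma coeff_orth_poly_degree [simp]: "coeff (orth_poly L n) n = 1"
  using orth_poly_monic by blast

lemma orth_poly_nonzero: "orth_poly L n \<noteq> 0"
  using coeff_orth_poly_degree[of L n] by (auto simp del: coeff_orth_poly_degree)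

lemma coeff_orth_poly_above: "n < k \<Longrightarrow> coeff (orth_poly L n) k = 0"
  by (simp add: coeff_eq_0)

lemma has_parity_orth_poly: "has_parity n (orth_poly L n)"
proof (induction n rule: induct_nat_012)
  case (ge2 n)
  have "has_parity (Suc (Suc n)) ([:0, 1:] * orth_poly L (Suc n))"
    using has_parity_mult[OF has_parity_X ge2(2)] by simp
  moreover have "has_parity (Suc (Suc n)) (smult (rec_coeff L (Suc n)) (orth_poly L n))"
    using has_parity_smult[OF ge2(1)] has_parity_add_2 by (metis add_2_eq_Suc')
  ultimately show ?case
    unfolding orth_poly_Suc_Suc by (rule has_parity_diff)
qed (simp_all add: has_parity_1 has_parity_X[unfolded One_nat_def])

lemma rec_coeff_unique:
  assumes "orth_poly L (Suc n) = [:0, 1:] * orth_poly L n - smult b (orth_poly L (n - 1))"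
  shows "b = rec_coeff L n"
proof -
  have "smult b (orth_poly L (n - 1)) = smult (rec_coeff L n) (orth_poly L (n - 1))"
    using assms X_mult_orth_poly[of L n] by (simp add: algebra_simps)
  then have "coeff (smult b (orth_poly L (n - 1))) (n - 1)
      = coeff (smult (rec_coeff L n) (orth_poly L (n - 1))) (n - 1)"
    by (rule arg_cong)
  then show ?thesis by simp
qed

text \<open>Truncated subtraction realises the convention beta_0 = beta_(-1) = 0.\<close>

definition freud_rhs :: "real \<Rightarrow> real \<Rightarrow> (nat \<Rightarrow> real) \<Rightarrow> nat \<Rightarrow> real" where
  "freud_rhs tau t b n = b n * (6 * (b (n + 2) * b (n + 1) + (b (n + 1) + b n) * (b (n + 1) + b n + b (n - 1))
       + b (n - 1) * (b n + b (n - 1) + b (n - 2)))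
     - 4 * tau * (b (n + 1) + b n + b (n - 1)) - 2 * t)"

locale symmetric_moment_functional =
  fixes L :: "real poly \<Rightarrow> real"
  assumes L_add: "L (p + q) = L p + L q"
    and L_smult: "L (smult c p) = c * L p"
    and L_square_pos: "p \<noteq> 0 \<Longrightarrow> 0 < L (p * p)"
    and L_reflect: "L (pcompose p [:0, -1:]) = L p"
begin

lemma L_0: "L 0 = 0"
  using L_smult[of 0 0] by simp

lemma L_minus: "L (- p) = - L p"
  using L_smult[of "-1" p] by simp

lemma L_diff: "L (p - q) = L p - L q"
  using L_add[of p "- q"] by (simp add: L_minus)

lemma L_sum: "L (\<Sum>i\<in>A. f i) = (\<Sum>i\<in>A. L (f i))"
  by (induction A rule: infinite_finite_induct) (simp_all add: L_0 L_add)

lemma L_odd_parity: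
  assumes "has_parity m p" and "odd m"
  shows "L p = 0"
proof -
  have "L p = L (smult (-1) p)"
    using L_reflect[of p] assms by (simp add: has_parity_def)
  then show ?thesis
    by (simp add: L_minus)
qed

lemma L_mult_expand:
  assumes "degree p \<le> N"
  shows "L (q * p) = (\<Sum>i\<le>N. coeff p i * L (q * monom 1 i))"
proof -
  have "q * p = q * (\<Sum>i\<le>N. monom (coeff p i) i)"
    by (simp add: poly_as_sum_of_monoms'[OF assms])
  also have "\<dots> = (\<Sum>i\<le>N. smult (coeff p i) (q * monom 1 i))"
    by (simp add: sum_distrib_left monom_altdef)
  finally show ?thesis
    by (simp add: L_sum L_smult)
qed

lemma orth_sqnorm_pos: "0 < orth_sqnorm L n"
  by (simp add: orth_sqnorm_def L_square_pos orth_poly_nonzero)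

lemma L_monic_mult_monom:
  assumes ortho: "\<And>k. k < n \<Longrightarrow> L (p * monom 1 k) = 0"
    and "degree p = n" and "coeff p n = 1"
  shows "L (p * monom 1 n) = L (p * p)"
proof -
  have "degree (p - monom 1 n) \<le> n" and "coeff (p - monom 1 n) n = 0"
    using assms(2,3) by (auto intro: degree_diff_le simp: degree_monom_le)
  then have "L (p * (p - monom 1 n)) = 0"
    by (subst L_mult_expand) (auto intro!: sum.neutral simp: ortho le_less)
  then show ?thesis
    by (simp add: right_diff_distrib L_diff)
qed

lemma orth_poly_orthogonal_monom: "k < n \<Longrightarrow> L (orth_poly L n * monom 1 k) = 0"
proof (induction n arbitrary: k rule: induct_nat_012)
  case 1
  then show ?case
    using L_odd_parity[OF has_parity_X] by simp
next
  case (ge2 n)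
  have self: "L (orth_poly L m * monom 1 m) = orth_sqnorm L m"
    if "\<And>k. k < m \<Longrightarrow> L (orth_poly L m * monom 1 k) = 0" for m
    using L_monic_mult_monom[OF that] by (simp add: orth_sqnorm_def)
  have split: "L (orth_poly L (Suc (Suc n)) * monom 1 k)
      = L (orth_poly L (Suc n) * monom 1 (Suc k)) - rec_coeff L (Suc n) * L (orth_poly L n * monom 1 k)"
    by (simp add: orth_poly_Suc_Suc monom_Suc algebra_simps L_diff L_smult)
  consider "k < n" | "k = n" | "k = Suc n"
    using ge2(3) by linarith
  then show ?case
  proof cases
    case 3
    have "odd (Suc n + Suc (Suc n))" and "odd (n + Suc n)"
      by simp_all
    then show ?thesis
      using split 3 L_odd_parity[OF has_parity_mult[OF has_parity_orth_poly has_parity_monom]] by simp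
  qed (use split self ge2 orth_sqnorm_pos[of n] in \<open>simp_all add: rec_coeff_def\<close>)
qed simp

lemma L_orth_poly_mult:
  assumes "degree q \<le> n"
  shows "L (orth_poly L n * q) = coeff q n * orth_sqnorm L n"
proof -
  have "L (orth_poly L n * q) = (\<Sum>i\<le>n. coeff q i * L (orth_poly L n * monom 1 i))"
    using assms by (rule L_mult_expand)
  also have "\<dots> = coeff q n * L (orth_poly L n * monom 1 n)"
    by (simp add: lessThan_Suc_atMost[symmetric] orth_poly_orthogonal_monom)
  also have "\<dots> = coeff q n * orth_sqnorm L n"
    using L_monic_mult_monom[OF orth_poly_orthogonal_monom] by (simp add: orth_sqnorm_def)
  finally show ?thesis .
qed

lemma orth_poly_orthogonal_low:
  assumes "\<And>k. n \<le> k \<Longrightarrow> coeff q k = 0"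
  shows "L (orth_poly L n * q) = 0"
proof -
  have "degree q \<le> n"
    using assms by (intro degree_le) auto
  then show ?thesis
    using assms by (simp add: L_orth_poly_mult)
qed

lemma orth_poly_orthogonal:
  assumes "i \<noteq> j"
  shows "L (orth_poly L i * orth_poly L j) = 0"
proof (cases i j rule: linorder_cases)
  case less
  then have "L (orth_poly L j * orth_poly L i) = 0"
    by (intro orth_poly_orthogonal_low) (simp add: coeff_orth_poly_above)
  then show ?thesis
    by (simp add: mult.commute)
next
  case greater
  then show ?thesis
    by (intro orth_poly_orthogonal_low) (simp add: coeff_orth_poly_above)
qed (use assms in simp)

lemma L_orth_poly_mult_orth_poly:
  "L (orth_poly L i * orth_poly L j) = (if i = j then orth_sqnorm L i else 0)"
  by (simp add: orth_poly_orthogonal orth_sqnorm_def)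

lemma orth_sqnorm_Suc: "orth_sqnorm L (Suc n) = rec_coeff L (Suc n) * orth_sqnorm L n"
  using orth_sqnorm_pos[of n] by (simp add: rec_coeff_def)

lemma orth_poly_unique:
  assumes "degree p = n" and "coeff p n = 1"
    and ortho: "\<And>k. k < n \<Longrightarrow> L (p * monom 1 k) = 0"
  shows "p = orth_poly L n"
proof -
  define d where "d = p - orth_poly L n"
  have d_low: "coeff d k = 0" if "n \<le> k" for k
    using that assms(1,2) by (cases "k = n") (auto simp: d_def coeff_eq_0)
  then have "degree d \<le> n"
    by (intro degree_le) auto
  then have "L (p * d) = 0"
    using d_low by (subst L_mult_expand) (auto intro!: sum.neutral simp: ortho le_less)
  moreover have "L (orth_poly L n * d) = 0"
    using d_low by (rule orth_poly_orthogonal_low)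
  ultimately have "L (d * d) = 0"
    by (simp add: d_def left_diff_distrib L_diff)
  then show ?thesis
    using L_square_pos[of d] by (auto simp: d_def)
qed

lemma L_X2_mult_orth_poly_square:
  "L ([:0, 0, 1:] * (orth_poly L n * orth_poly L n))
     = orth_sqnorm L n * (rec_coeff L (Suc n) + rec_coeff L n)"
proof -
  let ?b = "rec_coeff L n" and ?P = "orth_poly L (Suc n)" and ?Q = "orth_poly L (n - 1)"
  have "[:0, 0, 1:] * (orth_poly L n * orth_poly L n) = ([:0, 1:] * orth_poly L n) * ([:0, 1:] * orth_poly L n)"
    by (simp add: algebra_simps)
  also have "\<dots> = ?P * ?P + smult ?b (?P * ?Q) + smult ?b (?Q * ?P) + smult (?b * ?b) (?Q * ?Q)"
    unfolding X_mult_orth_poly by (simp add: algebra_simps)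
  finally have "L ([:0, 0, 1:] * (orth_poly L n * orth_poly L n))
      = orth_sqnorm L (Suc n) + ?b * (?b * orth_sqnorm L (n - 1))"
    by (simp add: L_add L_smult L_orth_poly_mult_orth_poly)
  also have "?b * (?b * orth_sqnorm L (n - 1)) = ?b * orth_sqnorm L n"
    using orth_sqnorm_Suc[of "n - 1"] by (cases n) simp_all
  finally show ?thesis
    by (simp add: orth_sqnorm_Suc algebra_simps)
qed

lemma L_pderiv_consecutive_orth_polys:
  assumes "1 \<le> n"
  shows "L (pderiv (orth_poly L n * orth_poly L (n - 1))) = real n * orth_sqnorm L (n - 1)"
proof -
  have "degree (pderiv (orth_poly L (n - 1))) \<le> n" and "coeff (pderiv (orth_poly L (n - 1))) n = 0"
    by (simp_all add: degree_pderiv coeff_pderiv coeff_orth_poly_above)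
  moreover have "degree (pderiv (orth_poly L n)) \<le> n - 1"
    and "coeff (pderiv (orth_poly L n)) (n - 1) = real n"
    using assms by (simp_all add: degree_pderiv coeff_pderiv)
  ultimately show ?thesis
    by (simp add: pderiv_mult L_add L_orth_poly_mult)
qed

text \<open>Each factor x P_k is expanded by the recurrence; the small cases are separate only because
  the indices n - 1, n - 2, n - 3 truncate.\<close>

lemma L_consecutive_orth_polys_mult_V':
  assumes "1 \<le> n"
  shows "L (orth_poly L n * orth_poly L (n - 1) * [:0, - 2 * t, 0, - 4 * tau, 0, 6:])
           = orth_sqnorm L (n - 1) * freud_rhs tau t (rec_coeff L) n"
proof -
  let ?P = "orth_poly L" and ?b = "rec_coeff L"
  define X :: "real poly" where "X = [:0, 1:]"
  have V: "?P n * ?P (n - 1) * [:0, - 2 * t, 0, - 4 * tau, 0, 6:]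
      = smult 6 ((X * (X * ?P n)) * (X * (X * (X * ?P (n - 1)))))
        - smult (4 * tau) ((X * ?P n) * (X * (X * ?P (n - 1))))
        - smult (2 * t) (?P n * (X * ?P (n - 1)))"
    by (simp add: X_def algebra_simps)
  have X_mult: "X * ?P i = ?P (Suc i) + smult (?b i) (?P (i - 1))" for i
    unfolding X_def by (rule X_mult_orth_poly)
  obtain m where m: "n = Suc m"
    using assms by (cases n) auto
  consider "m = 0" | "m = 1" | "m = 2" | k where "m = Suc (Suc (Suc k))"
    by (metis One_nat_def Suc_1 not0_implies_Suc numeral_3_eq_3)
  then show ?thesis
    unfolding V unfolding m freud_rhs_def
    by cases
      (simp_all del: orth_poly.simps add: X_mult distrib_left distrib_right L_add L_diff
         L_smult L_orth_poly_mult_orth_poly orth_sqnorm_Suc eval_nat_numeral,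
       simp_all add: algebra_simps eval_nat_numeral)
qed

text \<open>The hypothesis is integration by parts for a weight exp (- V) with
  V' = 6 x^5 - 4 tau x^3 - 2 t x.\<close>

lemma string_equation:
  assumes "\<And>p. L (pderiv p) = L (p * [:0, - 2 * t, 0, - 4 * tau, 0, 6:])" and "1 \<le> n"
  shows "real n = freud_rhs tau t (rec_coeff L) n"
  using assms L_pderiv_consecutive_orth_polys L_consecutive_orth_polys_mult_V'[of n t tau]
    orth_sqnorm_pos[of "n - 1"]
  by (metis mult.commute mult_right_cancel less_irrefl)

end

section \<open>Deformation by exp (s x^2): the Volterra lattice\<close>

text \<open>Polynomials carry no topology in the library, so polynomial-valued functions are
  differentiated coefficientwise.\<close>

definition has_poly_derivative :: "(real \<Rightarrow> real poly) \<Rightarrow> real poly \<Rightarrow> real \<Rightarrow> bool" where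
  "has_poly_derivative R Q t \<longleftrightarrow> (\<forall>i. ((\<lambda>s. coeff (R s) i) has_real_derivative coeff Q i) (at t))"

lemma has_poly_derivative_const: "has_poly_derivative (\<lambda>s. p) 0 t"
  by (simp add: has_poly_derivative_def)

lemma has_poly_derivative_diff:
  "has_poly_derivative R Q t \<Longrightarrow> has_poly_derivative R' Q' t
     \<Longrightarrow> has_poly_derivative (\<lambda>s. R s - R' s) (Q - Q') t"
  by (auto simp: has_poly_derivative_def intro!: derivative_eq_intros)

lemma has_poly_derivative_X_mult:
  "has_poly_derivative R Q t \<Longrightarrow> has_poly_derivative (\<lambda>s. [:0, 1:] * R s) ([:0, 1:] * Q) t"
  by (auto simp: has_poly_derivative_def coeff_pCons split: nat.split)

lemma has_poly_derivative_smult: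
  "(c has_real_derivative c') (at t) \<Longrightarrow> has_poly_derivative R Q t
     \<Longrightarrow> has_poly_derivative (\<lambda>s. smult (c s) (R s)) (smult c' (R t) + smult (c t) Q) t"
  by (auto simp: has_poly_derivative_def intro!: derivative_eq_intros)

lemma has_poly_derivative_mult:
  assumes "has_poly_derivative R Q t" and "has_poly_derivative R' Q' t"
  shows "has_poly_derivative (\<lambda>s. R s * R' s) (Q * R' t + R t * Q') t"
  unfolding has_poly_derivative_def
proof
  fix i
  have "((\<lambda>s. \<Sum>j\<le>i. coeff (R s) j * coeff (R' s) (i - j)) has_real_derivative
      (\<Sum>j\<le>i. coeff Q j * coeff (R' t) (i - j) + coeff Q' (i - j) * coeff (R t) j)) (at t)"
    using assms unfolding has_poly_derivative_def by (intro DERIV_sum DERIV_mult) auto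
  then show "((\<lambda>s. coeff (R s * R' s) i) has_real_derivative coeff (Q * R' t + R t * Q') i) (at t)"
    by (simp add: coeff_mult sum.distrib mult.commute[of "coeff Q' _" "coeff (R t) _"])
qed

lemma degree_le_if_has_poly_derivative:
  assumes "has_poly_derivative R Q t" and "\<And>s. degree (R s) \<le> N"
  shows "degree Q \<le> N"
proof (rule degree_le, intro allI impI)
  fix i
  assume "N < i"
  then have "coeff (R s) i = 0" for s
    using assms(2) by (meson coeff_eq_0 le_less_trans)
  then have "((\<lambda>s. coeff (R s) i) has_real_derivative 0) (at t)"
    by simp
  then show "coeff Q i = 0"
    using assms(1) DERIV_unique unfolding has_poly_derivative_def by blast
qed

text \<open>L s models the moment functional of w(x) exp (s x^2), whose s-derivative multiplies the
  integrand by x^2.\<close>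

locale volterra_family =
  fixes L :: "real \<Rightarrow> real poly \<Rightarrow> real"
  assumes symmetric: "symmetric_moment_functional (L s)"
    and L_has_derivative: "((\<lambda>s. L s p) has_real_derivative L t ([:0, 0, 1:] * p)) (at t)"
begin

lemma L_family_has_derivative:
  assumes R: "has_poly_derivative R Q t" and deg: "\<And>s. degree (R s) \<le> N"
  shows "((\<lambda>s. L s (R s)) has_real_derivative L t ([:0, 0, 1:] * R t) + L t Q) (at t)"
proof -
  note expand = symmetric_moment_functional.L_mult_expand[OF symmetric]
  have "((\<lambda>s. \<Sum>i\<le>N. coeff (R s) i * L s (monom 1 i)) has_real_derivative
      (\<Sum>i\<le>N. coeff Q i * L t (monom 1 i) + L t ([:0, 0, 1:] * monom 1 i) * coeff (R t) i)) (at t)"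
    using R unfolding has_poly_derivative_def by (intro DERIV_sum DERIV_mult L_has_derivative) auto
  moreover have "(\<Sum>i\<le>N. coeff Q i * L t (monom 1 i) + L t ([:0, 0, 1:] * monom 1 i) * coeff (R t) i)
      = L t ([:0, 0, 1:] * R t) + L t Q"
    using expand[OF deg, of t "[:0, 0, 1:]"] expand[OF degree_le_if_has_poly_derivative[OF R deg], of t 1]
    by (simp add: sum.distrib mult.commute)
  ultimately show ?thesis
    using expand[OF deg, of _ 1] by simp
qed

text \<open>Q has degree less than n, so it is orthogonal to P_n and only the factor x^2 contributes.\<close>

lemma orth_sqnorm_has_derivative_if:
  assumes P: "has_poly_derivative (\<lambda>s. orth_poly (L s) n) Q t"
    and low: "\<And>k. n \<le> k \<Longrightarrow> coeff Q k = 0"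
  shows "((\<lambda>s. orth_sqnorm (L s) n) has_real_derivative
           orth_sqnorm (L t) n * (rec_coeff (L t) (Suc n) + rec_coeff (L t) n)) (at t)"
proof -
  interpret symmetric_moment_functional "L t"
    by (rule symmetric)
  have "degree (orth_poly (L s) n * orth_poly (L s) n) \<le> n + n" for s
    by (metis degree_orth_poly degree_mult_le)
  from L_family_has_derivative[OF has_poly_derivative_mult[OF P P] this]
  have deriv: "((\<lambda>s. orth_sqnorm (L s) n) has_real_derivative
      L t ([:0, 0, 1:] * (orth_poly (L t) n * orth_poly (L t) n))
      + L t (Q * orth_poly (L t) n + orth_poly (L t) n * Q)) (at t)"
    by (simp add: orth_sqnorm_def)
  have "L t (orth_poly (L t) n * Q) = 0"
    using low by (rule orth_poly_orthogonal_low)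
  then have "L t (Q * orth_poly (L t) n + orth_poly (L t) n * Q) = 0"
    by (subst L_add) (simp add: mult.commute)
  with deriv show ?thesis
    unfolding L_X2_mult_orth_poly_square by simp
qed

text \<open>Differentiability of P_(n+2) requires that of beta_(n+1) = h_(n+1) / h_n, which the previous
  lemma provides at the lower indices.\<close>

lemma orth_poly_has_poly_derivative:
  "\<exists>Q. has_poly_derivative (\<lambda>s. orth_poly (L s) n) Q t \<and> (\<forall>k\<ge>n. coeff Q k = 0)"
proof (induction n rule: induct_nat_012)
  case 0
  show ?case
    using has_poly_derivative_const[of 1 t] by auto
next
  case 1
  show ?case
    using has_poly_derivative_const[of "[:0, 1:]" t] by auto
next
  case (ge2 j)
  obtain Q0 where Q0: "has_poly_derivative (\<lambda>s. orth_poly (L s) j) Q0 t" "\<And>k. j \<le> k \<Longrightarrow> coeff Q0 k = 0"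
    using ge2(1) by blast
  obtain Q1 where Q1: "has_poly_derivative (\<lambda>s. orth_poly (L s) (Suc j)) Q1 t"
      "\<And>k. Suc j \<le> k \<Longrightarrow> coeff Q1 k = 0"
    using ge2(2) by blast
  have "rec_coeff (L s) (Suc j) = orth_sqnorm (L s) (Suc j) / orth_sqnorm (L s) j" for s
    by (simp add: rec_coeff_def)
  then obtain c' where c': "((\<lambda>s. rec_coeff (L s) (Suc j)) has_real_derivative c') (at t)"
    using DERIV_divide[OF orth_sqnorm_has_derivative_if[OF Q1] orth_sqnorm_has_derivative_if[OF Q0]]
      symmetric_moment_functional.orth_sqnorm_pos[OF symmetric, of t j] by force
  define Q where "Q = [:0, 1:] * Q1 - (smult c' (orth_poly (L t) j) + smult (rec_coeff (L t) (Suc j)) Q0)"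
  have "has_poly_derivative (\<lambda>s. orth_poly (L s) (Suc (Suc j))) Q t"
    unfolding orth_poly_Suc_Suc Q_def
    by (intro has_poly_derivative_diff has_poly_derivative_X_mult has_poly_derivative_smult Q1 Q0 c')
  moreover have "coeff Q k = 0" if "Suc (Suc j) \<le> k" for k
    using that Q0(2) Q1(2) by (cases k) (simp_all add: Q_def coeff_pCons coeff_orth_poly_above)
  ultimately show ?case
    by blast
qed

lemma orth_sqnorm_has_derivative:
  "((\<lambda>s. orth_sqnorm (L s) n) has_real_derivative
      orth_sqnorm (L t) n * (rec_coeff (L t) (Suc n) + rec_coeff (L t) n)) (at t)"
  using orth_poly_has_poly_derivative orth_sqnorm_has_derivative_if by blast

lemma rec_coeff_has_derivative:
  "((\<lambda>s. rec_coeff (L s) n) has_real_derivative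
      rec_coeff (L t) n * (rec_coeff (L t) (Suc n) - rec_coeff (L t) (n - 1))) (at t)"
proof (cases n)
  case (Suc m)
  have h_pos: "0 < orth_sqnorm (L t) m"
    by (rule symmetric_moment_functional.orth_sqnorm_pos[OF symmetric])
  let ?h = "\<lambda>k. orth_sqnorm (L t) k" and ?b = "\<lambda>k. rec_coeff (L t) k"
  have "(\<lambda>s. rec_coeff (L s) n) = (\<lambda>s. orth_sqnorm (L s) n / orth_sqnorm (L s) m)"
    using Suc by (simp add: rec_coeff_def)
  moreover have "((\<lambda>s. orth_sqnorm (L s) n / orth_sqnorm (L s) m) has_real_derivative
      (?h n * (?b (Suc n) + ?b n) * ?h m - ?h n * (?h m * (?b (Suc m) + ?b m))) / (?h m * ?h m)) (at t)"
    using h_pos by (intro DERIV_divide orth_sqnorm_has_derivative) simp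
  moreover have "(?h n * (?b (Suc n) + ?b n) * ?h m - ?h n * (?h m * (?b (Suc m) + ?b m))) / (?h m * ?h m)
      = ?b n * (?b (Suc n) - ?b (n - 1))"
    using Suc h_pos by (simp add: rec_coeff_def field_simps)
  ultimately show ?thesis
    by simp
qed simp

end

section \<open>The weight exp (- x^6 + tau x^4 + t x^2)\<close>

lemma cubic_bounded_above:
  fixes a s :: real
  obtains B where "\<And>y. 0 \<le> y \<Longrightarrow> a * y ^ 2 + s * y - y ^ 3 \<le> B"
proof
  fix y :: real
  assume y: "0 \<le> y"
  define M where "M = 1 + \<bar>a\<bar> + \<bar>s\<bar>"
  have "a * y ^ 2 \<le> \<bar>a\<bar> * y ^ 2" and "s * y \<le> \<bar>s\<bar> * y"
    using y by (simp_all add: mult_right_mono)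
  moreover have "\<bar>a\<bar> * y ^ 2 + \<bar>s\<bar> * y - y ^ 3 \<le> \<bar>a\<bar> * M ^ 2 + \<bar>s\<bar> * M"
  proof (cases "y \<le> M")
    case True
    then have "\<bar>a\<bar> * y ^ 2 \<le> \<bar>a\<bar> * M ^ 2" and "\<bar>s\<bar> * y \<le> \<bar>s\<bar> * M"
      using y by (simp_all add: mult_left_mono power_mono)
    moreover have "0 \<le> y ^ 3"
      using y by simp
    ultimately show ?thesis
      by linarith
  next
    case False
    then have "y * 1 \<le> y * y"
      using y by (intro mult_left_mono) (simp_all add: M_def)
    then have "\<bar>s\<bar> * y \<le> \<bar>s\<bar> * y ^ 2"
      by (simp add: mult_left_mono power2_eq_square)
    moreover have "0 \<le> y ^ 2 * (y - \<bar>a\<bar> - \<bar>s\<bar>)"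
      using False y by (simp add: M_def)
    moreover have "0 \<le> \<bar>a\<bar> * M ^ 2 + \<bar>s\<bar> * M"
      by (simp add: M_def)
    ultimately show ?thesis
      by (simp add: algebra_simps power2_eq_square power3_eq_cube)
  qed
  ultimately show "a * y ^ 2 + s * y - y ^ 3 \<le> \<bar>a\<bar> * M ^ 2 + \<bar>s\<bar> * M"
    by linarith
qed

lemma weight_pos: "0 < weight tau t x"
  by (simp add: weight_def)

lemma weight_minus [simp]: "weight tau t (- x) = weight tau t x"
  by (simp add: weight_def)

lemma weight_le_gaussian:
  obtains B where "0 < B" and "\<And>x. weight tau t x \<le> B * exp (- (x ^ 2) / 2)"
proof -
  obtain B where B: "\<And>y. 0 \<le> y \<Longrightarrow> tau * y ^ 2 + (t + 1 / 2) * y - y ^ 3 \<le> B"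
    using cubic_bounded_above by blast
  have "weight tau t x \<le> exp B * exp (- (x ^ 2) / 2)" for x
  proof -
    have "- (x ^ 6) + tau * x ^ 4 + t * x ^ 2
        = (tau * (x ^ 2) ^ 2 + (t + 1 / 2) * x ^ 2 - (x ^ 2) ^ 3) - x ^ 2 / 2"
      by (simp add: algebra_simps flip: power_mult)
    also have "\<dots> \<le> B - x ^ 2 / 2"
      using B[of "x ^ 2"] by simp
    finally show ?thesis
      unfolding weight_def by (simp flip: exp_add)
  qed
  then show ?thesis
    using that[of "exp B"] by simp
qed

lemma integrable_power_weight: "integrable lborel (\<lambda>x. x ^ k * weight tau t x)"
proof -
  obtain B where "0 < B" and B: "\<And>x. weight tau t x \<le> B * exp (- (x ^ 2) / 2)"
    using weight_le_gaussian by blast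
  have "integrable lborel (\<lambda>x. (B * sqrt (2 * pi)) * (std_normal_density x * \<bar>x\<bar> ^ k))"
    by (intro integrable_mult_right integrable_std_normal_moment_abs)
  then show ?thesis
  proof (rule Bochner_Integration.integrable_bound)
    show "(\<lambda>x. x ^ k * weight tau t x) \<in> borel_measurable lborel"
      unfolding weight_def by measurable
    have "norm (x ^ k * weight tau t x)
        \<le> norm ((B * sqrt (2 * pi)) * (std_normal_density x * \<bar>x\<bar> ^ k))" for x
    proof -
      have "norm (x ^ k * weight tau t x) = \<bar>x\<bar> ^ k * weight tau t x"
        using weight_pos[of tau t x] by (simp add: abs_mult power_abs)
      also have "\<dots> \<le> \<bar>x\<bar> ^ k * (B * exp (- (x ^ 2) / 2))"
        by (intro mult_left_mono B) simp
      also have "\<dots> = norm ((B * sqrt (2 * pi)) * (std_normal_density x * \<bar>x\<bar> ^ k))"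
        using \<open>0 < B\<close> by (simp add: std_normal_density_def normal_density_def abs_mult)
      finally show ?thesis .
    qed
    then show "AE x in lborel. norm (x ^ k * weight tau t x)
        \<le> norm ((B * sqrt (2 * pi)) * (std_normal_density x * \<bar>x\<bar> ^ k))"
      by (intro AE_I2)
  qed
qed

lemma poly_times_weight_eq: "poly p x * weight tau t x = (\<Sum>i\<le>degree p. coeff p i * (x ^ i * weight tau t x))"
  by (simp add: poly_altdef sum_distrib_right mult.assoc)

lemma integrable_poly_weight: "integrable lborel (\<lambda>x. poly p x * weight tau t x)"
  unfolding poly_times_weight_eq by (auto intro!: integrable_sum integrable_mult_right integrable_power_weight)

lemma poly_weight_tendsto_0:
  shows "((\<lambda>x. poly p x * weight tau t x) \<longlongrightarrow> 0) at_top"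
    and "((\<lambda>x. poly p x * weight tau t x) \<longlongrightarrow> 0) at_bot"
proof -
  have "((\<lambda>x. x ^ k * weight tau t x) \<longlongrightarrow> 0) at_top"
    and "((\<lambda>x. x ^ k * weight tau t x) \<longlongrightarrow> 0) at_bot" for k
    unfolding weight_def by real_asymp+
  then show "((\<lambda>x. poly p x * weight tau t x) \<longlongrightarrow> 0) at_top"
    and "((\<lambda>x. poly p x * weight tau t x) \<longlongrightarrow> 0) at_bot"
    unfolding poly_times_weight_eq by (auto intro!: tendsto_null_sum tendsto_mult_right_zero)
qed

lemma weight_has_derivative:
  "(weight tau t has_real_derivative - poly [:0, - 2 * t, 0, - 4 * tau, 0, 6:] x * weight tau t x) (at x)"
  unfolding weight_def
  by (auto intro!: derivative_eq_intros simp: algebra_simps power_numeral_reduce)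

definition weight_integral :: "real \<Rightarrow> real \<Rightarrow> real poly \<Rightarrow> real" where
  "weight_integral tau t p = (LINT x|lborel. poly p x * weight tau t x)"

lemma weight_integral_add:
  "weight_integral tau t (p + q) = weight_integral tau t p + weight_integral tau t q"
  unfolding weight_integral_def by (simp add: distrib_right integrable_poly_weight)

lemma weight_integral_smult: "weight_integral tau t (smult c p) = c * weight_integral tau t p"
  unfolding weight_integral_def by (simp add: mult.assoc)

lemma weight_integral_reflect: "weight_integral tau t (pcompose p [:0, -1:]) = weight_integral tau t p"
proof -
  have "weight_integral tau t p
      = \<bar>-1\<bar> *\<^sub>R (LINT x|lborel. poly p (0 + -1 * x) * weight tau t (0 + -1 * x))"
    unfolding weight_integral_def by (rule lborel_integral_real_affine) simp
  then show ?thesis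
    by (simp add: weight_integral_def poly_pcompose)
qed

lemma weight_integral_square_pos:
  assumes "p \<noteq> 0"
  shows "0 < weight_integral tau t (p * p)"
proof -
  let ?f = "\<lambda>x. poly (p * p) x * weight tau t x"
  have nonneg: "AE x in lborel. 0 \<le> ?f x"
    by (intro AE_I2) (simp add: weight_pos less_imp_le)
  have "(LINT x|lborel. ?f x) \<noteq> 0"
  proof
    assume "(LINT x|lborel. ?f x) = 0"
    then have "AE x in lborel. ?f x = 0"
      using integral_nonneg_eq_0_iff_AE[OF integrable_poly_weight nonneg] by simp
    then have "AE x in lborel. x \<in> {x. poly p x = 0}"
      by eventually_elim (simp add: weight_pos[THEN less_imp_neq, symmetric])
    moreover have "AE x in lborel. \<forall>c\<in>{x. poly p x = 0}. x \<noteq> c"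
      using poly_roots_finite[OF assms] by (subst AE_finite_all) (auto intro: AE_lborel_singleton)
    ultimately have "AE x::real in lborel. False"
      by eventually_elim auto
    then show False
      by (simp add: trivial_limit_def[symmetric] ae_filter_eq_bot_iff)
  qed
  moreover have "0 \<le> (LINT x|lborel. ?f x)"
    by (intro integral_nonneg_AE nonneg)
  ultimately show ?thesis
    by (simp add: weight_integral_def)
qed

interpretation weight: symmetric_moment_functional "weight_integral tau t" for tau t
  by unfold_locales
    (simp_all add: weight_integral_add weight_integral_smult weight_integral_reflect weight_integral_square_pos)

lemma weight_integral_pderiv:
  "weight_integral tau t (pderiv p) = weight_integral tau t (p * [:0, - 2 * t, 0, - 4 * tau, 0, 6:])"
proof -
  let ?V = "[:0, - 2 * t, 0, - 4 * tau, 0, 6:]"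
  define F where "F x = poly p x * weight tau t x" for x
  define f where "f x = poly (pderiv p - p * ?V) x * weight tau t x" for x
  have "(F has_real_derivative f x) (at x)" for x
    unfolding F_def f_def
    by (auto intro!: derivative_eq_intros weight_has_derivative[THEN DERIV_cong] simp: algebra_simps)
  have "(LBINT x=-\<infinity>..\<infinity>. f x) = 0 - 0"
  proof (intro interval_integral_FTC_integrable)
    show "(F has_vector_derivative f x) (at x)" for x
      using \<open>(F has_real_derivative f x) (at x)\<close> by (simp add: has_real_derivative_iff_has_vector_derivative)
    show "isCont f x" for x
      unfolding f_def weight_def by (intro continuous_intros)
    show "set_integrable lborel (einterval (- \<infinity>) \<infinity>) f"
      unfolding set_integrable_def einterval_eq_UNIV f_def
      using integrable_poly_weight[of "pderiv p - p * ?V" tau t] by (simp del: poly_diff poly_mult)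
    show "((F \<circ> real_of_ereal) \<longlongrightarrow> 0) (at_right (- \<infinity>))"
      and "((F \<circ> real_of_ereal) \<longlongrightarrow> 0) (at_left \<infinity>)"
      unfolding ereal_tendsto_simps1 F_def by (rule poly_weight_tendsto_0)+
  qed auto
  then have "(LINT x|lborel. f x) = 0"
    by (simp add: interval_lebesgue_integral_def einterval_eq_UNIV set_lebesgue_integral_def)
  moreover have "(LINT x|lborel. f x) = weight_integral tau t (pderiv p) - weight_integral tau t (p * ?V)"
    unfolding f_def weight_integral_def poly_diff left_diff_distrib
    by (rule Bochner_Integration.integral_diff integrable_poly_weight)+
  ultimately show ?thesis
    by simp
qed

lemma abs_exp_minus_one_minus_le:
  fixes a :: real
  shows "\<bar>exp a - 1 - a\<bar> \<le> a ^ 2 * exp \<bar>a\<bar>"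
proof -
  obtain c where c: "\<bar>c\<bar> \<le> \<bar>a\<bar>" "exp a = (\<Sum>m<2. a ^ m / fact m) + exp c / fact 2 * a ^ 2"
    using Maclaurin_exp_le[of a 2] by blast
  then have "\<bar>exp a - 1 - a\<bar> = exp c / 2 * a ^ 2"
    by (simp add: numeral_2_eq_2)
  also have "\<dots> \<le> exp \<bar>a\<bar> * a ^ 2"
  proof (intro mult_right_mono)
    have "exp c \<le> exp \<bar>a\<bar>"
      using c(1) by (metis abs_ge_self exp_le_cancel_iff order_trans)
    then show "exp c / 2 \<le> exp \<bar>a\<bar>"
      using exp_gt_zero[of c] by linarith
  qed simp
  finally show ?thesis
    by (simp add: mult.commute)
qed

lemma has_real_derivative_if_quadratic_remainder:
  fixes f :: "real \<Rightarrow> real"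
  assumes "\<And>s. \<bar>s - t\<bar> \<le> 1 \<Longrightarrow> \<bar>f s - f t - (s - t) * D\<bar> \<le> C * (s - t) ^ 2"
  shows "(f has_real_derivative D) (at t)"
proof -
  have "norm ((f s - f t) / (s - t) - D) \<le> C * \<bar>s - t\<bar>" if "s \<noteq> t" "dist s t < 1" for s
  proof -
    have "(f s - f t) / (s - t) - D = (f s - f t - (s - t) * D) / (s - t)"
      using that(1) by (simp add: diff_divide_distrib)
    then have "norm ((f s - f t) / (s - t) - D) = \<bar>f s - f t - (s - t) * D\<bar> / \<bar>s - t\<bar>"
      by (simp add: abs_divide)
    also have "\<dots> \<le> C * (s - t) ^ 2 / \<bar>s - t\<bar>"
      using that(2) by (intro divide_right_mono assms) (simp_all add: dist_real_def)
    also have "\<dots> = C * \<bar>s - t\<bar>"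
      using that(1) by (auto simp: power2_eq_square abs_if field_simps)
    finally show ?thesis .
  qed
  then have "eventually (\<lambda>s. norm ((f s - f t) / (s - t) - D) \<le> C * \<bar>s - t\<bar>) (at t)"
    unfolding eventually_at by (intro exI[of _ 1]) auto
  moreover have "((\<lambda>s. C * \<bar>s - t\<bar>) \<longlongrightarrow> 0) (at t)"
    by (auto intro!: tendsto_eq_intros)
  ultimately have "((\<lambda>s. (f s - f t) / (s - t) - D) \<longlongrightarrow> 0) (at t)"
    by (rule Lim_null_comparison)
  then show ?thesis
    by (simp add: has_field_derivative_iff LIM_zero_iff)
qed

text \<open>Differentiation under the integral sign, dominated via abs (exp a - 1 - a) <= a^2 exp (abs a)
  by the weight at t + 1.\<close>

lemma weight_integral_has_derivative:
  "((\<lambda>s. weight_integral tau s p) has_real_derivative weight_integral tau t ([:0, 0, 1:] * p)) (at t)"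
proof (rule has_real_derivative_if_quadratic_remainder
    [where C = "LINT x|lborel. \<bar>poly ([:0, 0, 0, 0, 1:] * p) x * weight tau (t + 1) x\<bar>"])
  fix s
  assume s: "\<bar>s - t\<bar> \<le> 1"
  define h where "h = s - t"
  let ?g = "\<lambda>x. poly p x * weight tau s x - poly p x * weight tau t x
                 - h * (poly ([:0, 0, 1:] * p) x * weight tau t x)"
  let ?G = "\<lambda>x. \<bar>poly ([:0, 0, 0, 0, 1:] * p) x * weight tau (t + 1) x\<bar>"
  have "weight_integral tau s p - weight_integral tau t p - h * weight_integral tau t ([:0, 0, 1:] * p)
      = (LINT x|lborel. ?g x)"
    using integrable_poly_weight[of p tau s] integrable_poly_weight[of p tau t]
      integrable_poly_weight[of "[:0, 0, 1:] * p" tau t]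
    unfolding weight_integral_def by simp
  moreover have "\<bar>LINT x|lborel. ?g x\<bar> \<le> (LINT x|lborel. h ^ 2 * ?G x)"
  proof (rule integral_abs_bound_integral)
    show "integrable lborel ?g" and "integrable lborel (\<lambda>x. h ^ 2 * ?G x)"
      by (intro Bochner_Integration.integrable_diff integrable_mult_right integrable_abs integrable_poly_weight)+
    fix x :: real
    have w_s: "weight tau s x = weight tau t x * exp (h * x ^ 2)"
      and w_1: "weight tau (t + 1) x = weight tau t x * exp (x ^ 2)"
      by (simp_all add: weight_def h_def algebra_simps flip: exp_add)
    have "\<bar>exp (h * x ^ 2) - 1 - h * x ^ 2\<bar> \<le> (h * x ^ 2) ^ 2 * exp \<bar>h * x ^ 2\<bar>"
      by (rule abs_exp_minus_one_minus_le)
    also have "\<dots> \<le> (h * x ^ 2) ^ 2 * exp (x ^ 2)"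
      using s by (intro mult_left_mono) (simp_all add: h_def abs_mult mult_left_le_one_le)
    finally have bound: "\<bar>exp (h * x ^ 2) - 1 - h * x ^ 2\<bar> \<le> (h * x ^ 2) ^ 2 * exp (x ^ 2)" .
    have P4: "poly ([:0, 0, 0, 0, 1:] * p) x = (x ^ 2) ^ 2 * poly p x"
      by (simp add: algebra_simps power2_eq_square)
    have "?g x = poly p x * weight tau t x * (exp (h * x ^ 2) - 1 - h * x ^ 2)"
      by (simp add: w_s algebra_simps power2_eq_square)
    then have "\<bar>?g x\<bar> = \<bar>poly p x * weight tau t x\<bar> * \<bar>exp (h * x ^ 2) - 1 - h * x ^ 2\<bar>"
      by (simp only: abs_mult)
    also have "\<dots> \<le> \<bar>poly p x * weight tau t x\<bar> * ((h * x ^ 2) ^ 2 * exp (x ^ 2))"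
      by (intro mult_left_mono bound) simp
    also have "\<dots> = h ^ 2 * ?G x"
      unfolding P4 w_1 abs_mult by (simp add: power_mult_distrib)
    finally show "\<bar>?g x\<bar> \<le> h ^ 2 * ?G x" .
  qed
  ultimately show "\<bar>weight_integral tau s p - weight_integral tau t p - (s - t) * weight_integral tau t ([:0, 0, 1:] * p)\<bar>
      \<le> (LINT x|lborel. ?G x) * (s - t) ^ 2"
    by (simp add: h_def mult.commute)
qed

interpretation weight: volterra_family "weight_integral tau" for tau
  by unfold_locales (rule weight.symmetric_moment_functional_axioms weight_integral_has_derivative)+

lemma wip_eq_weight_integral: "wip tau t p q = weight_integral tau t (p * q)"
  by (simp add: wip_def weight_integral_def)

lemma monic_OP_eq_orth_poly: "monic_OP tau t n = orth_poly (weight_integral tau t) n"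
  unfolding monic_OP_def
proof (rule the_equality)
  show "degree (orth_poly (weight_integral tau t) n) = n \<and> lead_coeff (orth_poly (weight_integral tau t) n) = 1
      \<and> (\<forall>k<n. wip tau t (orth_poly (weight_integral tau t) n) (monom 1 k) = 0)"
    by (simp add: wip_eq_weight_integral weight.orth_poly_orthogonal_monom)
  show "p = orth_poly (weight_integral tau t) n"
    if "degree p = n \<and> lead_coeff p = 1 \<and> (\<forall>k<n. wip tau t p (monom 1 k) = 0)" for p
    using that by (intro weight.orth_poly_unique) (auto simp: wip_eq_weight_integral)
qed

lemma beta_eq_rec_coeff: "beta n tau t = rec_coeff (weight_integral tau t) n"
proof (cases n)
  case (Suc m)
  let ?P = "orth_poly (weight_integral tau t)"
  have "(THE b. ?P (Suc n) = [:0, 1:] * ?P n - smult b (?P (n - 1))) = rec_coeff (weight_integral tau t) n"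
    by (rule the_equality) (simp_all add: Suc orth_poly_Suc_Suc rec_coeff_unique)
  then show ?thesis
    using Suc by (simp add: beta_def monic_OP_eq_orth_poly)
qed (simp add: beta_def)

theorem lemma3p3:
  fixes tau t :: real and n :: nat
  assumes "n \<ge> 1"
  defines "b \<equiv> (\<lambda>m s. beta m tau s)"
  shows "b n differentiable at t \<and>
         b (Suc n) differentiable at t \<and>
         deriv (b n) differentiable at t \<and>
         deriv (b (Suc n)) differentiable at t \<and>
         deriv (deriv (b n)) t
           - 3 * (b n t + b (Suc n) t - 2/9 * tau) * deriv (b n) t
           + (b n t) ^ 3 + 6 * (b n t) ^ 2 * b (Suc n) t + 3 * b n t * (b (Suc n) t) ^ 2
           - 2/3 * tau * b n t * (b n t + 2 * b (Suc n) t)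
           - 1/3 * t * b n t = real n / 6 \<and>
         deriv (deriv (b (Suc n))) t
           + 3 * (b n t + b (Suc n) t - 2/9 * tau) * deriv (b (Suc n)) t
           + (b (Suc n) t) ^ 3 + 6 * (b (Suc n) t) ^ 2 * b n t + 3 * b (Suc n) t * (b n t) ^ 2
           - 2/3 * tau * b (Suc n) t * (2 * b n t + b (Suc n) t)
           - 1/3 * t * b (Suc n) t = real (n + 1) / 6"
proof -
  have b_eq: "b k = (\<lambda>s. rec_coeff (weight_integral tau s) k)" for k
    by (simp add: b_def beta_eq_rec_coeff)
  define d where "d k s = b k s * (b (Suc k) s - b (k - 1) s)" for k s
  have D1: "(b k has_real_derivative d k s) (at s)" for k s
    unfolding b_eq d_def by (rule weight.rec_coeff_has_derivative)
  then have d1: "deriv (b k) = d k" for k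
    by (intro ext DERIV_imp_deriv)
  have D2: "(d k has_real_derivative
      d k s * (b (Suc k) s - b (k - 1) s) + (d (Suc k) s - d (k - 1) s) * b k s) (at s)" for k s
    unfolding d_def[abs_def] using D1[unfolded d_def] by (intro DERIV_mult DERIV_diff)
  then have d2: "deriv (d k) t = d k t * (b (Suc k) t - b (k - 1) t) + (d (Suc k) t - d (k - 1) t) * b k t" for k
    by (rule DERIV_imp_deriv)
  have diff: "b k differentiable at t" "deriv (b k) differentiable at t" for k
    unfolding d1 real_differentiable_def using D1 D2 by blast+
  have string: "real k = freud_rhs tau t (\<lambda>j. b j t) k" if "1 \<le> k" for k
    unfolding b_eq using weight.string_equation[OF weight_integral_pderiv that] by simp
  obtain m where "n = Suc m"
    using assms(1) by (cases n) auto
  then show ?thesis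
    using diff unfolding d1 d2 string[OF assms(1)] string[of "n + 1", OF le_add2]
    by (simp add: d_def freud_rhs_def algebra_simps power2_eq_square power3_eq_cube)
qed

end
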